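(* Let $X$ be a Hausdorff space. Assume that there is a closed subset $F\subset X$ such that (a) both $F$ and $X-F$ are totally disconnected, and (b) the quotient space $X/F$ (obtained by collapsing $F$ to a single point) is hereditarily disconnected. Then $\mathcal{K}(X)$ is hereditarily disconnected.
   Context: For a $T_1$ space $X$, $\mathcal{K}(X)$ denotes the set of nonempty compact subsets of $X$ with the Vietoris topology, i.e. the topology generated by the sets $U^+=\{A: A\subset U\}$ and $U^-=\{A: A\cap U\neq\emptyset\}$ for $U$ open in $X$. A space is totally disconnected if for any two distinct points $x,y$ there is a clopen set containing $x$ but not $y$. A space is hereditarily disconnected if every nonempty connected subset is a singleton. *)

theory Defs
  imports "HOL-Analysis.Analysis"
begin

definition totally_disconnected_space :: "'a topology \<Rightarrow> bool" where
  "totally_disconnected_space X \<longleftrightarrow>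
     (\<forall>x\<in>topspace X. \<forall>y\<in>topspace X. x \<noteq> y \<longrightarrow>
        (\<exists>C. openin X C \<and> closedin X C \<and> x \<in> C \<and> y \<notin> C))"

definition hereditarily_disconnected_space :: "'a topology \<Rightarrow> bool" where
  "hereditarily_disconnected_space X \<longleftrightarrow>
     (\<forall>S. connectedin X S \<and> S \<noteq> {} \<longrightarrow> (\<exists>a. S = {a}))"

definition quotient_topology :: "'a topology \<Rightarrow> ('a \<Rightarrow> 'b) \<Rightarrow> 'b topology" where
  "quotient_topology X q =
     topology (\<lambda>U. U \<subseteq> q ` topspace X \<and> openin X {x \<in> topspace X. q x \<in> U})"

definition collapse_map :: "'a set \<Rightarrow> 'a \<Rightarrow> 'a set" where
  "collapse_map F x = (if x \<in> F then F else {x})"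

definition collapse_space :: "'a topology \<Rightarrow> 'a set \<Rightarrow> 'a set topology" where
  "collapse_space X F = quotient_topology X (collapse_map F)"

definition vietoris_compacts :: "'a topology \<Rightarrow> 'a set topology" where
  "vietoris_compacts X =
     subtopology
       (topology_generated_by
          ({{A. A \<subseteq> U} | U. openin X U} \<union> {{A. A \<inter> U \<noteq> {}} | U. openin X U}))
       {K. compactin X K \<and> K \<noteq> {}}"

end

theory Submission
  imports Defs
begin

(* Let \<C> be a connected family of nonempty compacta. A nonempty clopen subset P of \<Union>\<C> meets
   every member of \<C>: otherwise the Vietoris open sets "meets P" and "misses the closure of P"
   disconnect \<C>. Fix B \<in> \<C> and put T = F \<union> (\<Union>\<C> - B). Total disconnectedness of X - F shrinks
   a clopen subset of T missing F to a clopen subset of \<Union>\<C> missing B, so T has none; hence the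
   image of T in X/F is connected, so it is the single point F, i.e. all members of \<C> agree off F.
   Then total disconnectedness of F turns a point of A - B, which must lie in F, into a clopen
   subset of \<Union>\<C> missing B, so all members of \<C> coincide. *)

lemma openin_quotient_topology:
  "openin (quotient_topology X q) U \<longleftrightarrow>
     U \<subseteq> q ` topspace X \<and> openin X {x \<in> topspace X. q x \<in> U}"
proof -
  have "istopology (\<lambda>U. U \<subseteq> q ` topspace X \<and> openin X {x \<in> topspace X. q x \<in> U})"
    unfolding istopology_def
  proof (rule conjI; intro allI impI)
    fix S T
    assume "S \<subseteq> q ` topspace X \<and> openin X {x \<in> topspace X. q x \<in> S}"
      and "T \<subseteq> q ` topspace X \<and> openin X {x \<in> topspace X. q x \<in> T}"
    moreover have "{x \<in> topspace X. q x \<in> S \<inter> T} =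
        {x \<in> topspace X. q x \<in> S} \<inter> {x \<in> topspace X. q x \<in> T}"
      by auto
    ultimately show "S \<inter> T \<subseteq> q ` topspace X \<and> openin X {x \<in> topspace X. q x \<in> S \<inter> T}"
      by auto
  next
    fix \<K>
    assume "\<forall>S\<in>\<K>. S \<subseteq> q ` topspace X \<and> openin X {x \<in> topspace X. q x \<in> S}"
    moreover have "{x \<in> topspace X. q x \<in> \<Union>\<K>} = (\<Union>S\<in>\<K>. {x \<in> topspace X. q x \<in> S})"
      by auto
    ultimately show "\<Union>\<K> \<subseteq> q ` topspace X \<and> openin X {x \<in> topspace X. q x \<in> \<Union>\<K>}"
      by auto
  qed
  then show ?thesis
    unfolding quotient_topology_def by simp
qed

lemma topspace_quotient_topology: "topspace (quotient_topology X q) = q ` topspace X"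
proof -
  have "{x \<in> topspace X. q x \<in> q ` topspace X} = topspace X"
    by auto
  then have "openin (quotient_topology X q) (q ` topspace X)"
    by (simp add: openin_quotient_topology)
  then show ?thesis
    by (meson openin_quotient_topology openin_subset openin_topspace subset_antisym)
qed

lemma connectedin_collapse_image:
  assumes S: "S \<subseteq> topspace X" and "F \<subseteq> S" and "F \<noteq> {}"
    and no_clopen: "\<And>C. openin (subtopology X S) C \<Longrightarrow> closedin (subtopology X S) C \<Longrightarrow>
                       C \<inter> F = {} \<Longrightarrow> C = {}"
  shows "connectedin (collapse_space X F) (collapse_map F ` S)"
proof -
  let ?Y = "collapse_space X F" and ?q = "collapse_map F"
  have F_image: "F \<in> ?q ` S"
    using \<open>F \<subseteq> S\<close> \<open>F \<noteq> {}\<close> by (force simp: collapse_map_def)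
  have openin_Y: "openin ?Y E \<Longrightarrow> openin X {x \<in> topspace X. ?q x \<in> E}" for E
    by (simp add: collapse_space_def openin_quotient_topology)
  have side_empty: "E' \<inter> ?q ` S = {}"
    if "openin ?Y E" "openin ?Y E'" "?q ` S \<subseteq> E \<union> E'" "E \<inter> E' \<inter> ?q ` S = {}" "F \<notin> E'"
    for E E'
  proof -
    let ?C = "{x \<in> topspace X. ?q x \<in> E'} \<inter> S"
    have complement: "S - ?C = {x \<in> topspace X. ?q x \<in> E} \<inter> S"
      using that(3,4) S by blast
    have "openin (subtopology X S) ?C"
      using openin_Y[OF that(2)] by (rule openin_subtopology_Int)
    moreover have "closedin (subtopology X S) ?C"
      unfolding closedin_def topspace_subtopology_subset[OF S] complement
      using openin_subtopology_Int[OF openin_Y[OF that(1)], of S] by auto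
    moreover have "?C \<inter> F = {}"
      using that(5) by (auto simp: collapse_map_def)
    ultimately have "?C = {}"
      by (rule no_clopen)
    then show ?thesis
      using S by blast
  qed
  show ?thesis
    unfolding connectedin
  proof (intro conjI notI)
    show "?q ` S \<subseteq> topspace ?Y"
      using S by (auto simp: collapse_space_def topspace_quotient_topology)
  next
    assume "\<exists>E1 E2. openin ?Y E1 \<and> openin ?Y E2 \<and> ?q ` S \<subseteq> E1 \<union> E2 \<and>
        E1 \<inter> E2 \<inter> ?q ` S = {} \<and> E1 \<inter> ?q ` S \<noteq> {} \<and> E2 \<inter> ?q ` S \<noteq> {}"
    then obtain E1 E2 where "openin ?Y E1" "openin ?Y E2" "?q ` S \<subseteq> E1 \<union> E2"
      "E1 \<inter> E2 \<inter> ?q ` S = {}" "E1 \<inter> ?q ` S \<noteq> {}" "E2 \<inter> ?q ` S \<noteq> {}"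
      by blast
    then show False
      using side_empty[of E1 E2] side_empty[of E2 E1] F_image by blast
  qed
qed

lemma hereditarily_disconnected_collapse_subset:
  assumes hd: "hereditarily_disconnected_space (collapse_space X F)"
    and S: "S \<subseteq> topspace X" and "F \<subseteq> S"
    and no_clopen: "\<And>C. openin (subtopology X S) C \<Longrightarrow> closedin (subtopology X S) C \<Longrightarrow>
                       C \<inter> F = {} \<Longrightarrow> C = {}"
  shows "S \<subseteq> F"
proof (cases "F = {}")
  case True
  have "topspace (subtopology X S) = S"
    using S by (rule topspace_subtopology_subset)
  then show ?thesis
    using no_clopen[of S] True openin_topspace[of "subtopology X S"]
      closedin_topspace[of "subtopology X S"]
    by simp
next
  case False
  then obtain f where "f \<in> F"
    by blast
  have "connectedin (collapse_space X F) (collapse_map F ` S)"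
    using connectedin_collapse_image[OF S \<open>F \<subseteq> S\<close> False no_clopen] .
  moreover have "collapse_map F ` S \<noteq> {}"
    using \<open>f \<in> F\<close> \<open>F \<subseteq> S\<close> by blast
  ultimately obtain a where a: "collapse_map F ` S = {a}"
    using hd unfolding hereditarily_disconnected_space_def by meson
  show ?thesis
  proof
    fix x assume "x \<in> S"
    then have "collapse_map F x = collapse_map F f"
      using a \<open>f \<in> F\<close> \<open>F \<subseteq> S\<close> by blast
    then have "collapse_map F x = F"
      using \<open>f \<in> F\<close> by (simp add: collapse_map_def)
    then show "x \<in> F"
      by (metis collapse_map_def singletonI)
  qed
qed

lemma totally_disconnected_space_clopen_avoiding_compact:
  assumes td: "totally_disconnected_space Z" and L: "compactin Z L"
    and x: "x \<in> topspace Z" "x \<notin> L"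
  obtains V where "openin Z V" "closedin Z V" "x \<in> V" "V \<inter> L = {}"
proof -
  have "\<exists>C. openin Z C \<and> closedin Z C \<and> y \<in> C \<and> x \<notin> C" if "y \<in> L" for y
    using td x that compactin_subset_topspace[OF L]
    unfolding totally_disconnected_space_def by (metis subsetD)
  then obtain C where C: "\<And>y. y \<in> L \<Longrightarrow> openin Z (C y) \<and> closedin Z (C y) \<and> y \<in> C y \<and> x \<notin> C y"
    by metis
  then obtain \<F> where \<F>: "finite \<F>" "\<F> \<subseteq> C ` L" "L \<subseteq> \<Union>\<F>"
    using L unfolding compactin_def by (metis (no_types, lifting) UN_I imageE subsetI)
  have "closedin Z (\<Union>\<F>)"
    using \<F>(1,2) C by (intro closedin_Union) auto
  moreover have "openin Z (\<Union>\<F>)"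
    using \<F>(2) C by (intro openin_Union) auto
  moreover have "x \<notin> \<Union>\<F>"
    using \<F>(2) C by blast
  ultimately show ?thesis
    using that[of "topspace Z - \<Union>\<F>"] x(1) \<F>(3) by blast
qed

lemma topspace_vietoris_compacts:
  "topspace (vietoris_compacts X) = {K. compactin X K \<and> K \<noteq> {}}"
proof -
  have "K \<in> {A. A \<subseteq> topspace X}" if "compactin X K" for K
    using compactin_subset_topspace[OF that] by simp
  then show ?thesis
    unfolding vietoris_compacts_def topspace_subtopology topology_generated_by_topspace
    by blast
qed

lemma openin_vietoris_compacts_upper:
  assumes "openin X U"
  shows "openin (vietoris_compacts X) {A \<in> topspace (vietoris_compacts X). A \<subseteq> U}"
proof -
  have "openin (topology_generated_by
          ({{A. A \<subseteq> U} | U. openin X U} \<union> {{A. A \<inter> U \<noteq> {}} | U. openin X U}))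
          {A. A \<subseteq> U}"
    by (rule topology_generated_by_Basis) (use assms in blast)
  then show ?thesis
    unfolding topspace_vietoris_compacts unfolding vietoris_compacts_def openin_subtopology
    by blast
qed

lemma openin_vietoris_compacts_lower:
  assumes "openin X U"
  shows "openin (vietoris_compacts X) {A \<in> topspace (vietoris_compacts X). A \<inter> U \<noteq> {}}"
proof -
  have "openin (topology_generated_by
          ({{A. A \<subseteq> U} | U. openin X U} \<union> {{A. A \<inter> U \<noteq> {}} | U. openin X U}))
          {A. A \<inter> U \<noteq> {}}"
    by (rule topology_generated_by_Basis) (use assms in blast)
  then show ?thesis
    unfolding topspace_vietoris_compacts unfolding vietoris_compacts_def openin_subtopology
    by blast
qed

lemma connectedin_vietoris_compacts_member:
  assumes "connectedin (vietoris_compacts X) \<C>" and "A \<in> \<C>"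
  shows "compactin X A" and "A \<subseteq> topspace X"
  using connectedin_subset_topspace[OF assms(1)] assms(2)
  by (auto simp: topspace_vietoris_compacts dest: compactin_subset_topspace)

lemma vietoris_connectedin_clopen_meets_member:
  assumes conn: "connectedin (vietoris_compacts X) \<C>" and B: "B \<in> \<C>"
    and P_open: "openin (subtopology X (\<Union>\<C>)) P"
    and P_closed: "closedin (subtopology X (\<Union>\<C>)) P"
    and "P \<noteq> {}"
  shows "P \<inter> B \<noteq> {}"
proof
  assume PB: "P \<inter> B = {}"
  obtain G where G: "openin X G" "P = G \<inter> \<Union>\<C>"
    using P_open by (auto simp: openin_subtopology)
  obtain C where C: "closedin X C" "P = C \<inter> \<Union>\<C>"
    using P_closed by (auto simp: closedin_subtopology)
  let ?K = "topspace (vietoris_compacts X)"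
  have members: "\<C> \<subseteq> ?K"
    using conn by (rule connectedin_subset_topspace)
  let ?U1 = "{A \<in> ?K. A \<inter> G \<noteq> {}}" and ?U2 = "{A \<in> ?K. A \<subseteq> topspace X - C}"
  have "openin (vietoris_compacts X) ?U1"
    using G(1) by (rule openin_vietoris_compacts_lower)
  moreover have "openin (vietoris_compacts X) ?U2"
    using C(1) by (intro openin_vietoris_compacts_upper) blast
  moreover have "\<C> \<subseteq> ?U1 \<union> ?U2"
    using members G(2) C(2) connectedin_vietoris_compacts_member(2)[OF conn] by blast
  moreover have "?U1 \<inter> ?U2 \<inter> \<C> = {}"
    using G(2) C(2) by blast
  moreover have "?U1 \<inter> \<C> \<noteq> {}"
    using \<open>P \<noteq> {}\<close> members G(2) by blast
  moreover have "?U2 \<inter> \<C> \<noteq> {}"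
    using B members PB C(2) connectedin_vietoris_compacts_member(2)[OF conn B] by blast
  ultimately show False
    using conn unfolding connectedin by blast
qed

lemma vietoris_connectedin_remainder_clopen_empty:
  assumes "Hausdorff_space X" and "closedin X F"
    and td: "totally_disconnected_space (subtopology X (topspace X - F))"
    and conn: "connectedin (vietoris_compacts X) \<C>" and B: "B \<in> \<C>"
    and S_open: "openin (subtopology X (F \<union> (\<Union>\<C> - B))) S"
    and S_closed: "closedin (subtopology X (F \<union> (\<Union>\<C> - B))) S"
    and SF: "S \<inter> F = {}"
  shows "S = {}"
proof (rule equals0I)
  fix x assume "x \<in> S"
  let ?T = "F \<union> (\<Union>\<C> - B)"
  obtain G where G: "openin X G" "S = G \<inter> ?T"
    using S_open by (auto simp: openin_subtopology)
  obtain C where C: "closedin X C" "S = C \<inter> ?T"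
    using S_closed by (auto simp: closedin_subtopology)
  have CF: "C \<inter> F = {}"
    using C(2) SF by blast
  have B_compact: "compactin X B" and B_closed: "closedin X B"
    using connectedin_vietoris_compacts_member[OF conn B] assms(1) compactin_imp_closedin
    by auto
  have x: "x \<in> \<Union>\<C> - B" "x \<notin> F" "x \<in> topspace X"
    using \<open>x \<in> S\<close> SF G(2) connectedin_vietoris_compacts_member(2)[OF conn] by auto
  have "compactin (subtopology X (topspace X - F)) (C \<inter> B)"
    using closed_Int_compactin[OF C(1) B_compact] CF compactin_subset_topspace
    by (auto simp: compactin_subtopology)
  \<comment> \<open>Cutting S down by V keeps its closure away from B, making S \<inter> V clopen in \<Union>\<C>.\<close>
  then obtain V where V_open: "openin (subtopology X (topspace X - F)) V"
    and V_closed: "closedin (subtopology X (topspace X - F)) V"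
    and "x \<in> V" and "V \<inter> (C \<inter> B) = {}"
    by (rule totally_disconnected_space_clopen_avoiding_compact[OF td])
      (use x in auto)
  have "openin X V"
    using V_open openin_trans_full[OF _ openin_diff[OF openin_topspace assms(2)]] by blast
  obtain D where D: "closedin X D" "V = D \<inter> (topspace X - F)"
    using V_closed by (auto simp: closedin_subtopology)
  have "openin (subtopology X (\<Union>\<C>)) (S \<inter> V)"
  proof -
    have "S \<inter> V = (G \<inter> V - B) \<inter> \<Union>\<C>"
      using G(2) D(2) SF by blast
    moreover have "openin X (G \<inter> V - B)"
      using G(1) \<open>openin X V\<close> B_closed by blast
    ultimately show ?thesis
      unfolding openin_subtopology by blast
  qed
  moreover have "closedin (subtopology X (\<Union>\<C>)) (S \<inter> V)"
  proof -
    have "S \<inter> V = (C \<inter> (D \<union> F)) \<inter> \<Union>\<C>"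
      using C(2) D(2) CF \<open>V \<inter> (C \<inter> B) = {}\<close> connectedin_vietoris_compacts_member(2)[OF conn]
      by blast
    moreover have "closedin X (C \<inter> (D \<union> F))"
      using C(1) D(1) assms(2) by blast
    ultimately show ?thesis
      unfolding closedin_subtopology by blast
  qed
  moreover have "S \<inter> V \<noteq> {}"
    using \<open>x \<in> S\<close> \<open>x \<in> V\<close> by blast
  ultimately have "S \<inter> V \<inter> B \<noteq> {}"
    by (rule vietoris_connectedin_clopen_meets_member[OF conn B])
  then show False
    using \<open>V \<inter> (C \<inter> B) = {}\<close> C(2) by blast
qed

lemma vietoris_connectedin_diff_subset:
  assumes "Hausdorff_space X" and "closedin X F"
    and "totally_disconnected_space (subtopology X (topspace X - F))"
    and "hereditarily_disconnected_space (collapse_space X F)"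
    and conn: "connectedin (vietoris_compacts X) \<C>" and "A \<in> \<C>" and B: "B \<in> \<C>"
  shows "A - F \<subseteq> B"
proof -
  have "F \<union> (\<Union>\<C> - B) \<subseteq> F"
  proof (rule hereditarily_disconnected_collapse_subset[OF assms(4)])
    show "F \<union> (\<Union>\<C> - B) \<subseteq> topspace X"
      using closedin_subset[OF assms(2)] connectedin_vietoris_compacts_member(2)[OF conn] by blast
    show "F \<subseteq> F \<union> (\<Union>\<C> - B)"
      by blast
    show "C = {}" if "openin (subtopology X (F \<union> (\<Union>\<C> - B))) C"
      and "closedin (subtopology X (F \<union> (\<Union>\<C> - B))) C" and "C \<inter> F = {}" for C
      using vietoris_connectedin_remainder_clopen_empty[OF assms(1-3) conn B that] .
  qed
  then show ?thesis
    using \<open>A \<in> \<C>\<close> by blast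
qed

lemma vietoris_connectedin_agree_off_subset:
  assumes "Hausdorff_space X" and "closedin X F"
    and td: "totally_disconnected_space (subtopology X F)"
    and conn: "connectedin (vietoris_compacts X) \<C>"
    and agree: "\<And>A. A \<in> \<C> \<Longrightarrow> A - F = E"
    and A: "A \<in> \<C>" and B: "B \<in> \<C>"
  shows "A \<subseteq> B"
proof
  fix y assume "y \<in> A"
  show "y \<in> B"
  proof (rule ccontr)
    assume "y \<notin> B"
    then have "y \<in> F"
      using agree[OF A] agree[OF B] \<open>y \<in> A\<close> by blast
    have B_compact: "compactin X B" and B_closed: "closedin X B"
      using connectedin_vietoris_compacts_member[OF conn B] assms(1) compactin_imp_closedin
      by auto
    have "compactin (subtopology X F) (F \<inter> B)"
      using closed_Int_compactin[OF assms(2) B_compact] by (simp add: compactin_subtopology)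
    then obtain V where V_open: "openin (subtopology X F) V"
      and V_closed: "closedin (subtopology X F) V"
      and "y \<in> V" and VB: "V \<inter> (F \<inter> B) = {}"
      by (rule totally_disconnected_space_clopen_avoiding_compact[OF td])
        (use \<open>y \<in> F\<close> \<open>y \<notin> B\<close> closedin_subset[OF assms(2)] in auto)
    obtain U where U: "openin X U" "V = U \<inter> F"
      using V_open by (auto simp: openin_subtopology)
    have "closedin X V"
      using closedin_trans_full[OF V_closed assms(2)] .
    have "E \<subseteq> topspace X"
      using agree[OF B] connectedin_vietoris_compacts_member(2)[OF conn B] by blast
    then have "E \<subseteq> X closure_of E"
      by (rule closure_of_subset)
    have "X closure_of E \<subseteq> B"
      using agree[OF B] B_closed by (intro closure_of_minimal) auto
    \<comment> \<open>Off F all members of \<C> equal E, whose closure lies in B and hence misses V.\<close>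
    have "V \<inter> \<Union>\<C> = (U - X closure_of E) \<inter> \<Union>\<C>"
      using U(2) VB agree \<open>E \<subseteq> X closure_of E\<close> \<open>X closure_of E \<subseteq> B\<close> by blast
    then have "openin (subtopology X (\<Union>\<C>)) (V \<inter> \<Union>\<C>)"
      using U(1) by (simp add: openin_subtopology_Int openin_diff)
    moreover have "closedin (subtopology X (\<Union>\<C>)) (V \<inter> \<Union>\<C>)"
      using closedin_subtopology_Int_closed[OF \<open>closedin X V\<close>] by (metis inf_commute)
    moreover have "V \<inter> \<Union>\<C> \<noteq> {}"
      using \<open>y \<in> V\<close> \<open>y \<in> A\<close> A by blast
    ultimately have "V \<inter> \<Union>\<C> \<inter> B \<noteq> {}"
      by (rule vietoris_connectedin_clopen_meets_member[OF conn B])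
    then show False
      using VB U(2) by blast
  qed
qed

theorem mainTheorem1:
  fixes X :: "'a topology" and F :: "'a set"
  assumes "Hausdorff_space X"
    and "closedin X F"
    and "totally_disconnected_space (subtopology X F)"
    and "totally_disconnected_space (subtopology X (topspace X - F))"
    and "hereditarily_disconnected_space (collapse_space X F)"
  shows "hereditarily_disconnected_space (vietoris_compacts X)"
  unfolding hereditarily_disconnected_space_def
proof (intro allI impI)
  fix \<C>
  assume "connectedin (vietoris_compacts X) \<C> \<and> \<C> \<noteq> {}"
  then obtain A0 where conn: "connectedin (vietoris_compacts X) \<C>" and "A0 \<in> \<C>"
    by blast
  have agree: "A - F = A0 - F" if "A \<in> \<C>" for A
    using vietoris_connectedin_diff_subset[OF assms(1,2,4,5) conn that \<open>A0 \<in> \<C>\<close>]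
      vietoris_connectedin_diff_subset[OF assms(1,2,4,5) conn \<open>A0 \<in> \<C>\<close> that]
    by blast
  have "A \<subseteq> B" if "A \<in> \<C>" and "B \<in> \<C>" for A B
    using vietoris_connectedin_agree_off_subset[OF assms(1-3) conn agree that] .
  then show "\<exists>a. \<C> = {a}"
    using \<open>A0 \<in> \<C>\<close> by blast
qed

end
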